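(* Assume the standing hypotheses (H). For each $(t,\mathbf x)\in\mathbf D$, $$\widetilde g(t,\mathbf x)=-\Sigma\big(\phi^\star S^2\mathcal C_{SS}-(\beta\mathcal V_A+S^2\Gamma)\big)\widetilde\sigma-\Sigma\Big(\phi^\star S\mathcal C_{S\Sigma}-S\frac{\partial\Delta}{\partial\Sigma}\Big)\widetilde\eta-\frac12\big(\phi^\star\mathcal C_{\Sigma\Sigma}-\mathcal V_{\Sigma\Sigma}\big)\widetilde\xi,$$ where $(\widetilde\nu,\widetilde\sigma,\widetilde\eta,\widetilde\xi)=\widetilde{\boldsymbol\zeta}$, $\phi^\star=\mathcal V_\Sigma/\mathcal C_\Sigma$, and all functions are evaluated at $(t,\mathbf x)$.
   Context: Setting. Fix $T>0$, $S_0>0$, $\Sigma_0>0$, $A_0\in\mathbb R$. $\Omega$: continuous paths $\omega=(\omega^S,\omega^\Sigma,\omega^A):[0,T]\to\mathbb R^3$ with $\omega_0=(S_0,\Sigma_0,A_0)$ (uniform topology, Borel $\sigma$-algebra $\mathcal F$); $S,\Sigma,A$ coordinate processes, $\mathbb F$ their raw filtration, $M_t=\sup_{u\le t}S_u$, $\mathbf X_t=(S_t,A_t,M_t,\Sigma_t)$. $\mathbf G=\mathbb R_+\times\mathbb R\times\mathbb R_+$, $\mathbf D^0=(0,T)\times\mathbf G\times\mathbb R_+$ (points $(t,\mathbf x)$, $\mathbf x=(S,A,M,\Sigma)$); $0<\underline\Sigma<\Sigma_0<\overline\Sigma$, $\mathbf D=(0,T)\times\mathbf G\times[\underline\Sigma,\overline\Sigma]$.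 $\|\cdot\|$ Euclidean norm, $\mathbf e_4$ fourth unit vector, $x^-=\max(-x,0)$. Call: $\mathcal C(t,S,\Sigma)$ with $\mathcal C_t+\frac12\Sigma^2S^2\mathcal C_{SS}=0$, $\mathcal C(T_{\mathsf C},S,\Sigma)=\mathsf C(S)$. $b^{\mathcal C}(t,\mathbf x;\boldsymbol\zeta)=\nu\mathcal C_\Sigma+\frac12S^2\mathcal C_{SS}(\sigma^2-\Sigma^2)+\sigma\eta S\mathcal C_{S\Sigma}+\frac12(\eta^2+\xi)\mathcal C_{\Sigma\Sigma}$ for $\boldsymbol\zeta=(\nu,\sigma,\eta,\xi)$. Models: $\mathfrak P^{00}$ = probability measures $P$ on $(\Omega,\mathcal F)$ with progressively measurable $\boldsymbol\zeta^P=(\nu^P,\sigma^P,\eta^P,\xi^P)$ such that $S$, $\Sigma-\int_0^\cdot\nu^P_tdt$ are continuous local $P$-martingales with $d\langle S\rangle_t=S_t^2(\sigma^P_t)^2dt$, $d\langle\Sigma\rangle_t=((\eta^P_t)^2+\xi^P_t)dt$, $d\langle S,\Sigma\rangle_t=S_t\sigma^P_t\eta^P_tdt$, $S,\Sigma>0$, $\xi^P\ge0$, $b^{\mathcal C}(t,\mathbf X_t;\boldsymbol\zeta^P_t)=0$ $dt\times P$-a.e.; for Borel $\alpha,\beta,\gamma,\delta:[0,T]\times\mathbb R^3\to\mathbb R$, $\mathfrak P^0$ = those $P$ with $dA_t=(\alpha+\frac12(\sigma^P_t)^2\beta)dt+\gamma dS_t+\delta dM_t$. $\boldsymbol\zeta^0(\Sigma)=(0,\Sigma,0,0)^\top$;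 reference model: $\boldsymbol\zeta^P_t=\boldsymbol\zeta^0(\Sigma_t)$ a.e. Non-traded option: $\mathcal V(\cdot,\Sigma)$ solves $\mathcal V_t+(\alpha+\frac12\beta\Sigma^2)\mathcal V_A+\frac12\Sigma^2S^2(\mathcal V_{SS}+2\gamma\mathcal V_{SA}+\gamma^2\mathcal V_{AA})=0$ on $(0,T)\times\mathbf G$, $\delta\mathcal V_A+\mathcal V_M=0$ on $\{S\ge M\}$, $\mathcal V(T,\cdot,\Sigma)=\mathsf V$. $\Delta=\mathcal V_S+\gamma\mathcal V_A$, $\Gamma=\mathcal V_{SS}+2\gamma\mathcal V_{SA}+\gamma^2\mathcal V_{AA}$, $\frac{\partial\Delta}{\partial\Sigma}:=\mathcal V_{S\Sigma}+\gamma\mathcal V_{A\Sigma}$. P&L: $V_t=\mathcal V(t,\mathbf X_t)$, $C_t=\mathcal C(t,S_t,\Sigma_t)$; strategies $\boldsymbol\upsilon=(\theta,\phi)$ real locally bounded progressive; $Y^{\boldsymbol\upsilon,P}_t=Y_0+V_0+\int_0^t\theta dS+\int_0^t\phi dC-V_t$. Preferences: $\Psi=\mathrm{diag}(\psi_\nu,\psi_\sigma,\psi_\eta,\psi_\xi)$, positive; a utility $U$, strategy set $\mathfrak Y$, model set $\mathfrak P\subset\mathfrak P^0$. Candidate control: $\mathbf c=(\mathcal C_\Sigma,\Sigma S^2\mathcal C_{SS},\Sigma S\mathcal C_{S\Sigma},\frac12\mathcal C_{\Sigma\Sigma})^\top$, $\mathbf v=(\mathcal V_\Sigma,\Sigma(\beta\mathcal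 V_A+S^2\Gamma),\Sigma S\frac{\partial\Delta}{\partial\Sigma},\frac12\mathcal V_{\Sigma\Sigma})^\top$; $\lambda=\frac{\mathbf c^\top\Psi\mathbf v}{\mathbf c^\top\Psi\mathbf c}$ if $\mathcal V_{\Sigma\Sigma}-\frac{\mathbf c^\top\Psi\mathbf v}{\mathbf c^\top\Psi\mathbf c}\mathcal C_{\Sigma\Sigma}\ge0$, else $\lambda=\frac{\mathbf c^\top\Psi\mathbf v-\frac14\mathcal C_{\Sigma\Sigma}\mathcal V_{\Sigma\Sigma}\psi_\xi}{\mathbf c^\top\Psi\mathbf c-\frac14\mathcal C_{\Sigma\Sigma}^2\psi_\xi}$; $\mu=\frac12(\mathcal V_{\Sigma\Sigma}-\lambda\mathcal C_{\Sigma\Sigma})^-$; $\widetilde{\boldsymbol\zeta}=\Psi(\mathbf v-\lambda\mathbf c+\mu\mathbf e_4)$; $\boldsymbol\zeta^\psi=\boldsymbol\zeta^0(\Sigma)+\widetilde{\boldsymbol\zeta}\mathbf 1_{\{\underline\Sigma<\Sigma<\overline\Sigma\}}\psi$; $\widetilde g=\mathbf v^\top\widetilde{\boldsymbol\zeta}$. Cash-equivalent PDE: for $\Sigma\in[\underline\Sigma,\overline\Sigma]$, $\widetilde w_t+(\alpha+\frac12\beta\Sigma^2)\widetilde w_A+\frac12\Sigma^2S^2(\widetilde w_{SS}+2\gamma\widetilde w_{SA}+\gamma^2\widetilde w_{AA})+\frac12\widetilde g(\cdot,\Sigma)=0$ on $(0,T)\times\mathbf G$, $\delta\widetilde w_A+\widetilde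 w_M=0$ on $\{S\ge M\}$, $\widetilde w(T,\cdot,\Sigma)=0$. $L^p_{\mathfrak P}$: Borel $K$ on $\mathbf D^0$ with $\sup_{P\in\mathfrak P}E^P[\int_0^T|K(t,\mathbf X_t)|^pdt]^{1/p}<\infty$. Candidate asymptotic model family: $(P^\psi)_{\psi\in(0,\psi_0)}\subset\mathfrak P$, $\psi_0\in(0,1)$, with $K_0\in L^4_{\mathfrak P}$ and $\|\boldsymbol\zeta^{P^\psi}_t-\boldsymbol\zeta^\psi(t,\mathbf X_t)\|\le K_0(t,\mathbf X_t)\psi^2$ $dt\times P^\psi$-a.e. Assumption (A): (a) $\exists K_{\mathfrak Y}$: $Y^{\boldsymbol\upsilon,P}>-K_{\mathfrak Y}$ $dt\times P$-a.e. for all $\boldsymbol\upsilon\in\mathfrak Y$, $P\in\mathfrak P$; (b) $\mathfrak P$ contains a candidate asymptotic model family and a reference model, and constants $\underline\nu<0<\overline\nu$, $0<\underline\sigma<\underline\Sigma$, $\overline\Sigma<\overline\sigma$, $\underline\eta<0<\overline\eta$, $\overline\xi>0$ bound $\nu^P,\sigma^P,\eta^P,\xi^P,\Sigma$ in $[\underline\nu,\overline\nu],[\underline\sigma,\overline\sigma],[\underline\eta,\overline\eta],[0,\overline\xi],[\underline\Sigma,\overline\Sigma]$ $dt\times P$-a.e. for all $P\in\mathfrak P$; (c) $T_{\mathsf C}\ge T$, $\mathcal C\in C^{1,2,2}((0,T_{\mathsf C})\times\mathbb R_+^2)\cap C([0,T_{\mathsf C}]\times\overline{\mathbb R}_+^2)$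 solves the call PDE classically for $\Sigma\in[\underline\Sigma,\overline\Sigma]$, $\mathcal C_\Sigma\ne0$ and $|\mathcal C_{\Sigma\Sigma}|\le K_{\mathcal C}(|\mathcal C_\Sigma|+|S^2\mathcal C_{SS}|+|S\mathcal C_{S\Sigma}|)$ on $(0,T)\times\mathbb R_+\times[\underline\Sigma,\overline\Sigma]$ with $K_{\mathcal C}\in L^2_{\mathfrak P}$; (d) $\mathcal V\in C^{1,2,2,1,2}(\mathbf D^0)\cap C(\overline{\mathbf D^0})$ solves the $\mathcal V$-PDE classically for $\Sigma\in[\underline\Sigma,\overline\Sigma]$, $|\mathcal V_\Sigma|,|\beta\mathcal V_A+S^2\Gamma|,|S\frac{\partial\Delta}{\partial\Sigma}|,|\mathcal V_{\Sigma\Sigma}|\le K_{\mathcal V}$ on $\mathbf D$; (e) $\widetilde w\in C^{1,2,2,1,2}(\mathbf D^0)\cap C(\overline{\mathbf D^0})$ solves the cash-equivalent PDE classically for $\Sigma\in[\underline\Sigma,\overline\Sigma]$, $0\le\widetilde w\le K_{\widetilde w}$ on $\mathbf D$, and $\widetilde w_\Sigma,S(\widetilde w_S+\gamma\widetilde w_A),\beta\widetilde w_A+S^2(\widetilde w_{SS}+2\gamma\widetilde w_{SA}+\gamma^2\widetilde w_{AA}),S(\widetilde w_{S\Sigma}+\gamma\widetilde w_{A\Sigma}),\widetilde w_{\Sigma\Sigma}\in L^4_{\mathfrak P}$; (f) $U\in C^3(\mathbb R)$, $U'>0$, $U''<0$, $-U''/U'$ nonincreasing. Delta-vega hedge $\boldsymbol\upsilon^\star_t=(\Delta-\frac{\mathcal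 V_\Sigma}{\mathcal C_\Sigma}\mathcal C_S,\frac{\mathcal V_\Sigma}{\mathcal C_\Sigma})(t,\mathbf X_t)$. Standing hypotheses (H): Assumption (A) holds, $\boldsymbol\upsilon^\star\in\mathfrak Y$, and $(P^\psi)_{\psi\in(0,\psi_0)}\subset\mathfrak P$ is a candidate asymptotic model family. *)

theory Defs
  imports "HOL-Analysis.Analysis"
begin

text \<open>Call price C(t,S,Sigma).\<close>
definition C_t where "C_t C t S s = deriv (\<lambda>u. C u S s) t"
definition C_S where "C_S C t S s = deriv (\<lambda>x. C t x s) S"
definition C_Sig where "C_Sig C t S s = deriv (\<lambda>y. C t S y) s"
definition C_SS where "C_SS C t S s = deriv (\<lambda>x. C_S C t x s) S"
definition C_SSig where "C_SSig C t S s = deriv (\<lambda>y. C_S C t S y) s"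
definition C_SigSig where "C_SigSig C t S s = deriv (\<lambda>y. C_Sig C t S y) s"

text \<open>Non-traded option value V(t,S,A,M,Sigma).\<close>
definition V_t where "V_t V t S A M s = deriv (\<lambda>u. V u S A M s) t"
definition V_S where "V_S V t S A M s = deriv (\<lambda>x. V t x A M s) S"
definition V_A where "V_A V t S A M s = deriv (\<lambda>a. V t S a M s) A"
definition V_M where "V_M V t S A M s = deriv (\<lambda>m. V t S A m s) M"
definition V_Sig where "V_Sig V t S A M s = deriv (\<lambda>y. V t S A M y) s"
definition V_SS where "V_SS V t S A M s = deriv (\<lambda>x. V_S V t x A M s) S"
definition V_SA where "V_SA V t S A M s = deriv (\<lambda>a. V_S V t S a M s) A"
definition V_AA where "V_AA V t S A M s = deriv (\<lambda>a. V_A V t S a M s) A"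
definition V_SSig where "V_SSig V t S A M s = deriv (\<lambda>y. V_S V t S A M y) s"
definition V_ASig where "V_ASig V t S A M s = deriv (\<lambda>y. V_A V t S A M y) s"
definition V_SigSig where "V_SigSig V t S A M s = deriv (\<lambda>y. V_Sig V t S A M y) s"

definition Delta where
  "Delta V gam t S A M s = V_S V t S A M s + gam t S A M * V_A V t S A M s"
definition Gamma where
  "Gamma V gam t S A M s = V_SS V t S A M s + 2 * gam t S A M * V_SA V t S A M s
     + (gam t S A M)\<^sup>2 * V_AA V t S A M s"
definition dDelta_dSig where
  "dDelta_dSig V gam t S A M s = V_SSig V t S A M s + gam t S A M * V_ASig V t S A M s"

text \<open>psi = (psi_nu, psi_sigma, psi_eta, psi_xi), Psi = diag psi.\<close>
definition Psi_mul :: "real^4 \<Rightarrow> real^4 \<Rightarrow> real^4" where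
  "Psi_mul psi x = (\<chi> i. psi $ i * x $ i)"

definition e4 :: "real^4" where "e4 = vector [0, 0, 0, 1]"

definition cvec :: "_ \<Rightarrow> real \<Rightarrow> real \<Rightarrow> real \<Rightarrow> real^4" where
  "cvec C t S s = vector [C_Sig C t S s, s * S\<^sup>2 * C_SS C t S s, s * S * C_SSig C t S s,
                          C_SigSig C t S s / 2]"

definition vvec :: "_ \<Rightarrow> _ \<Rightarrow> _ \<Rightarrow> real \<Rightarrow> real \<Rightarrow> real \<Rightarrow> real \<Rightarrow> real \<Rightarrow> real^4" where
  "vvec V bet gam t S A M s = vector [V_Sig V t S A M s,
      s * (bet t S A M * V_A V t S A M s + S\<^sup>2 * Gamma V gam t S A M s),
      s * S * dDelta_dSig V gam t S A M s,
      V_SigSig V t S A M s / 2]"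

definition lam where
  "lam psi C V bet gam t S A M s =
    (let c = cvec C t S s; v = vvec V bet gam t S A M s;
         CSS = C_SigSig C t S s; VSS = V_SigSig V t S A M s;
         a = c \<bullet> Psi_mul psi v; b = c \<bullet> Psi_mul psi c
     in if VSS - (a / b) * CSS \<ge> 0 then a / b
        else (a - CSS * VSS * psi $ 4 / 4) / (b - CSS\<^sup>2 * psi $ 4 / 4))"

definition negpart :: "real \<Rightarrow> real" where "negpart x = max (- x) 0"

definition mu where
  "mu psi C V bet gam t S A M s =
     negpart (V_SigSig V t S A M s - lam psi C V bet gam t S A M s * C_SigSig C t S s) / 2"

definition zeta_tilde :: "real^4 \<Rightarrow> _ \<Rightarrow> _ \<Rightarrow> _ \<Rightarrow> _ \<Rightarrow> real \<Rightarrow> real \<Rightarrow> real \<Rightarrow> real \<Rightarrow> real \<Rightarrow> real^4" where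
  "zeta_tilde psi C V bet gam t S A M s =
     Psi_mul psi (vvec V bet gam t S A M s - lam psi C V bet gam t S A M s *\<^sub>R cvec C t S s
                  + mu psi C V bet gam t S A M s *\<^sub>R e4)"

definition g_tilde where
  "g_tilde psi C V bet gam t S A M s =
     vvec V bet gam t S A M s \<bullet> zeta_tilde psi C V bet gam t S A M s"

end

theory Submission
  imports Defs
begin

text \<open>The multiplier \<open>\<lambda>\<close> and the slack \<open>\<mu>\<close> are chosen precisely so that
  \<open>\<zeta>\<close> satisfies the linearised call constraint \<open>c \<bullet> \<zeta> = 0\<close> (in the second branch
  of \<open>\<lambda>\<close> the slack is active). Hence \<open>g = v \<bullet> \<zeta> = (v - \<phi> c) \<bullet> \<zeta>\<close> for every
  scalar \<open>\<phi>\<close>, and the vega-hedge ratio \<open>\<phi> = v\<^sub>1 / c\<^sub>1\<close> kills the first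
  coordinate.\<close>

lemma vector_4 [simp]:
  "vector [a, b, c, d] $ (1::4) = (a::'a::zero)" "vector [a, b, c, d] $ (2::4) = b"
  "vector [a, b, c, d] $ (3::4) = c" "vector [a, b, c, d] $ (4::4) = d"
  by (simp_all add: vector_def)

lemma inner_vec4: "(x::real^4) \<bullet> y = x$1 * y$1 + x$2 * y$2 + x$3 * y$3 + x$4 * y$4"
  unfolding inner_vec_def by (simp add: sum_4)

lemma inner_Psi_mul_sum_e4:
  "c \<bullet> Psi_mul p (v - l *\<^sub>R c + m *\<^sub>R e4)
     = c \<bullet> Psi_mul p v - l * (c \<bullet> Psi_mul p c) + m * p$4 * c$4"
  unfolding inner_vec4 Psi_mul_def e4_def by (simp add: algebra_simps)

lemma inner_Psi_mul_self_gt: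
  fixes p c :: "real^4"
  assumes "\<forall>i. 0 < p$i" and "c$1 \<noteq> 0"
  shows "p$4 * (c$4)\<^sup>2 < c \<bullet> Psi_mul p c"
proof -
  have "0 < p$1 * (c$1)\<^sup>2" and "0 \<le> p$2 * (c$2)\<^sup>2" and "0 \<le> p$3 * (c$3)\<^sup>2"
    using assms by (simp_all add: less_imp_le)
  then show ?thesis
    unfolding inner_vec4 Psi_mul_def by (simp add: power2_eq_square algebra_simps)
qed

text \<open>Here \<open>a = c \<bullet> \<Psi> v\<close>, \<open>b = c \<bullet> \<Psi> c\<close> and \<open>q = \<psi>\<^sub>\<xi>\<close>. In the second branch
  \<open>(v\<^sub>4 - l c\<^sub>4)(b - q c\<^sub>4\<^sup>2) = b v\<^sub>4 - a c\<^sub>4 < 0\<close>, so the slack is active.\<close>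

lemma multiplier_balances:
  fixes a b q c4 v4 l :: real
  assumes d_pos: "0 < b - q * c4\<^sup>2" and "0 \<le> q"
    and l: "l = (if 0 \<le> v4 - a / b * c4 then a / b else (a - q * c4 * v4) / (b - q * c4\<^sup>2))"
  shows "a - l * b + negpart (v4 - l * c4) * q * c4 = 0"
proof -
  have b_pos: "0 < b" using d_pos \<open>0 \<le> q\<close> by (smt (verit) mult_nonneg_nonneg zero_le_power2)
  show ?thesis
  proof (cases "0 \<le> v4 - a / b * c4")
    case True
    then show ?thesis using l b_pos by (simp add: negpart_def)
  next
    case False
    then have l_eq: "l * (b - q * c4\<^sup>2) = a - q * c4 * v4" using l d_pos by simp
    have "(v4 - l * c4) * (b - q * c4\<^sup>2) = v4 * (b - q * c4\<^sup>2) - c4 * (l * (b - q * c4\<^sup>2))"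
      by (simp add: algebra_simps)
    also have "\<dots> = b * (v4 - a / b * c4)"
      unfolding l_eq using b_pos by (simp add: field_simps power2_eq_square)
    also have "\<dots> < 0" using False b_pos by (simp add: mult_pos_neg)
    finally have "v4 - l * c4 < 0" using d_pos by (simp add: mult_less_0_iff)
    then show ?thesis using l_eq by (simp add: negpart_def algebra_simps power2_eq_square)
  qed
qed

lemma cvec_nth:
  "cvec C t S s $ 1 = C_Sig C t S s" "cvec C t S s $ 2 = s * S\<^sup>2 * C_SS C t S s"
  "cvec C t S s $ 3 = s * S * C_SSig C t S s" "cvec C t S s $ 4 = C_SigSig C t S s / 2"
  unfolding cvec_def by simp_all

lemma vvec_nth:
  "vvec V bet gam t S A M s $ 1 = V_Sig V t S A M s"
  "vvec V bet gam t S A M s $ 2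
     = s * (bet t S A M * V_A V t S A M s + S\<^sup>2 * Gamma V gam t S A M s)"
  "vvec V bet gam t S A M s $ 3 = s * S * dDelta_dSig V gam t S A M s"
  "vvec V bet gam t S A M s $ 4 = V_SigSig V t S A M s / 2"
  unfolding vvec_def by simp_all

lemma zeta_tilde_orthogonal:
  assumes psi_pos: "\<forall>i. 0 < psi$i" and vega: "C_Sig C t S s \<noteq> 0"
  shows "cvec C t S s \<bullet> zeta_tilde psi C V bet gam t S A M s = 0"
proof -
  define c where "c = cvec C t S s"
  define v where "v = vvec V bet gam t S A M s"
  define l where "l = lam psi C V bet gam t S A M s"
  define a where "a = c \<bullet> Psi_mul psi v"
  define b where "b = c \<bullet> Psi_mul psi c"
  have c4: "C_SigSig C t S s = 2 * c$4" and v4: "V_SigSig V t S A M s = 2 * v$4"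
    unfolding c_def v_def cvec_nth vvec_nth by simp_all
  have "c$1 \<noteq> 0" using vega unfolding c_def cvec_nth .
  then have d_pos: "0 < b - psi$4 * (c$4)\<^sup>2"
    using inner_Psi_mul_self_gt[OF psi_pos] unfolding b_def by simp
  have branch_iff: "(0 \<le> 2 * v$4 - a / b * (2 * c$4)) = (0 \<le> v$4 - a / b * c$4)"
  proof -
    have "2 * v$4 - a / b * (2 * c$4) = 2 * (v$4 - a / b * c$4)" by (simp add: algebra_simps)
    then show ?thesis by linarith
  qed
  have l_eq: "l = (if 0 \<le> v$4 - a / b * c$4 then a / b
                   else (a - psi$4 * c$4 * v$4) / (b - psi$4 * (c$4)\<^sup>2))"
    unfolding l_def lam_def Let_def c_def[symmetric] v_def[symmetric] a_def[symmetric]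
      b_def[symmetric] c4 v4 branch_iff
    by (simp add: power2_eq_square algebra_simps)
  have mu_eq: "mu psi C V bet gam t S A M s = negpart (v$4 - l * c$4)"
    unfolding mu_def l_def[symmetric] c4 v4 negpart_def by (simp add: max_def algebra_simps)
  have "c \<bullet> zeta_tilde psi C V bet gam t S A M s
          = a - l * b + negpart (v$4 - l * c$4) * psi$4 * c$4"
    unfolding zeta_tilde_def mu_eq l_def[symmetric] c_def[symmetric] v_def[symmetric]
      inner_Psi_mul_sum_e4 a_def b_def ..
  also have "\<dots> = 0"
    using multiplier_balances[OF d_pos _ l_eq] psi_pos by (simp add: less_imp_le)
  finally show ?thesis unfolding c_def .
qed

lemma g_tilde_hedged:
  assumes psi_pos: "\<forall>i. 0 < psi$i" and vega: "C_Sig C t S s \<noteq> 0"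
  shows "g_tilde psi C V bet gam t S A M s
     = (vvec V bet gam t S A M s - \<phi> *\<^sub>R cvec C t S s) \<bullet> zeta_tilde psi C V bet gam t S A M s"
  using zeta_tilde_orthogonal[OF psi_pos vega]
  unfolding g_tilde_def by (simp add: inner_diff_left)

theorem corollary5p7:
  fixes T TC S0 Sig0 Sig_lo Sig_hi :: real
    and psi :: "real^4"
    and C :: "real \<Rightarrow> real \<Rightarrow> real \<Rightarrow> real"
    and Cpay :: "real \<Rightarrow> real"
    and V :: "real \<Rightarrow> real \<Rightarrow> real \<Rightarrow> real \<Rightarrow> real \<Rightarrow> real"
    and Vpay :: "real \<Rightarrow> real \<Rightarrow> real \<Rightarrow> real"
    and alp bet gam del :: "real \<Rightarrow> real \<Rightarrow> real \<Rightarrow> real \<Rightarrow> real"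
    and K_V :: real
  assumes "0 < T" and "0 < S0"
    and "0 < Sig_lo" and "Sig_lo < Sig0" and "Sig0 < Sig_hi"
    and psi_pos: "\<forall>i. 0 < psi $ i"
    and "T \<le> TC"
    and C_pde: "\<forall>t S s. 0 < t \<and> t < TC \<and> 0 < S \<and> Sig_lo \<le> s \<and> s \<le> Sig_hi \<longrightarrow>
                  C_t C t S s + s\<^sup>2 * S\<^sup>2 * C_SS C t S s / 2 = 0"
    and C_term: "\<forall>S s. C TC S s = Cpay S"
    and C_vega: "\<forall>t S s. 0 < t \<and> t < T \<and> 0 < S \<and> Sig_lo \<le> s \<and> s \<le> Sig_hi \<longrightarrow>
                  C_Sig C t S s \<noteq> 0"
    and V_pde: "\<forall>t S A M s. 0 < t \<and> t < T \<and> 0 < S \<and> 0 < M \<and> Sig_lo \<le> s \<and> s \<le> Sig_hi \<longrightarrow>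
                  V_t V t S A M s + (alp t S A M + bet t S A M * s\<^sup>2 / 2) * V_A V t S A M s
                  + s\<^sup>2 * S\<^sup>2 * Gamma V gam t S A M s / 2 = 0"
    and V_bdry: "\<forall>t S A M s. 0 < t \<and> t < T \<and> 0 < S \<and> 0 < M \<and> S \<ge> M
                  \<and> Sig_lo \<le> s \<and> s \<le> Sig_hi \<longrightarrow>
                  del t S A M * V_A V t S A M s + V_M V t S A M s = 0"
    and V_term: "\<forall>S A M s. V T S A M s = Vpay S A M"
    and V_bounds: "\<forall>t S A M s. 0 < t \<and> t < T \<and> 0 < S \<and> 0 < M \<and> Sig_lo \<le> s \<and> s \<le> Sig_hi \<longrightarrow>
                  \<bar>V_Sig V t S A M s\<bar> \<le> K_V
                  \<and> \<bar>bet t S A M * V_A V t S A M s + S\<^sup>2 * Gamma V gam t S A M s\<bar> \<le> K_V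
                  \<and> \<bar>S * dDelta_dSig V gam t S A M s\<bar> \<le> K_V
                  \<and> \<bar>V_SigSig V t S A M s\<bar> \<le> K_V"
  shows "\<forall>t S A M s. 0 < t \<and> t < T \<and> 0 < S \<and> 0 < M \<and> Sig_lo \<le> s \<and> s \<le> Sig_hi \<longrightarrow>
    (let zt = zeta_tilde psi C V bet gam t S A M s;
         phi = V_Sig V t S A M s / C_Sig C t S s
     in g_tilde psi C V bet gam t S A M s =
          - s * (phi * S\<^sup>2 * C_SS C t S s
                 - (bet t S A M * V_A V t S A M s + S\<^sup>2 * Gamma V gam t S A M s)) * zt $ 2
          - s * (phi * S * C_SSig C t S s - S * dDelta_dSig V gam t S A M s) * zt $ 3
          - (phi * C_SigSig C t S s - V_SigSig V t S A M s) * zt $ 4 / 2)"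
proof (intro allI impI)
  fix t S A M s :: real
  assume "0 < t \<and> t < T \<and> 0 < S \<and> 0 < M \<and> Sig_lo \<le> s \<and> s \<le> Sig_hi"
  then have vega: "C_Sig C t S s \<noteq> 0" using C_vega by blast
  show "let zt = zeta_tilde psi C V bet gam t S A M s;
         phi = V_Sig V t S A M s / C_Sig C t S s
     in g_tilde psi C V bet gam t S A M s =
          - s * (phi * S\<^sup>2 * C_SS C t S s
                 - (bet t S A M * V_A V t S A M s + S\<^sup>2 * Gamma V gam t S A M s)) * zt $ 2
          - s * (phi * S * C_SSig C t S s - S * dDelta_dSig V gam t S A M s) * zt $ 3
          - (phi * C_SigSig C t S s - V_SigSig V t S A M s) * zt $ 4 / 2"
    unfolding Let_def g_tilde_hedged[OF psi_pos vega, where \<phi> = "V_Sig V t S A M s / C_Sig C t S s"]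
      inner_vec4
    using vega by (simp add: cvec_nth vvec_nth field_simps)
qed

end
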